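(* Let $s\in\mathbb{N}$ and let $H$ be an $s$-periodic generalized Jacobi matrix with data $(p_j,\varepsilon_j,b_j)_{j\in\mathbb{Z}_+}$, and let $P_j,Q_j$ be its associated polynomials. Then its $m$-function is \[ m(\lambda)=\frac{-(P_s(\lambda)+\varepsilon_{s-1}b_{s-1}Q_{s-1}(\lambda))+\sqrt{(P_s(\lambda)-\varepsilon_{s-1}b_{s-1}Q_{s-1}(\lambda))^2-4}}{2\varepsilon_{s-1}b_{s-1}P_{s-1}(\lambda)}, \] where the cut of the square root is the set $E$ and the branch is chosen so that $m(\lambda)\to 0$ as $\lambda\to\infty$.
   Context: For a real monic polynomial $p(\lambda)=\lambda^n+p_{n-1}\lambda^{n-1}+\dots+p_0$, its companion matrix is the $n\times n$ matrix $C_p$ with ones on the subdiagonal, last column $(-p_0,-p_1,\dots,-p_{n-1})^\top$, and zeros elsewhere; its symmetrizator is the Hankel matrix $E_p$ whose $(i,k)$ entry ($1\le i,k\le n$) is $p_{i+k-1}$ if $i+k-1\le n$ (with $p_n=1$) and $0$ otherwise. Data: real monic polynomials $p_j$ of degree $k_j\ge1$, signs $\varepsilon_j\in\{\pm1\}$, numbers $b_j>0$, $j\in\mathbb{Z}_+$. The generalized Jacobi matrix $H$ is the semi-infinite block tridiagonal matrix with diagonal blocks $A_j=C_{p_j}$, subdiagonal blocks $B_j$ ($k_{j+1}\times k_j$) whose only nonzero entry is $b_j$ in position $(1,k_j)$, and superdiagonal blocks $\widetilde B_j$ ($k_j\times k_{j+1}$) whose only nonzero entry is $\widetilde b_j=\varepsilon_j\varepsilon_{j+1}b_j$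 in position $(1,k_{j+1})$. It is $s$-periodic if $p_{j+s}=p_j$, $b_{j+s}=b_j$, $\varepsilon_{j+s}=\varepsilon_j$ for all $j$; then $H$ is a bounded operator on $\ell^2_{[0,\infty)}$. Let $G=\mathrm{diag}(\varepsilon_0E_{p_0}^{-1},\varepsilon_1E_{p_1}^{-1},\dots)$ and $[x,y]=(Gx,y)_{\ell^2}$. The $m$-function of $H$ is $m(\lambda)=[(H-\lambda)^{-1}e,e]$, $e=(1,0,0,\dots)^\top$. Set $\mathcal W_j(\lambda)=\begin{pmatrix}0&-\varepsilon_j/b_j\\ \varepsilon_jb_j& p_j(\lambda)/b_j\end{pmatrix}$, $\mathcal W_{[0,j]}=\mathcal W_0\mathcal W_1\cdots\mathcal W_j$, and define polynomials $P_0=1$, $Q_0=0$, $(-Q_{j+1},P_{j+1})^\top=\mathcal W_{[0,j]}(0,1)^\top$. The monodromy matrix is $T(\lambda)=\mathcal W_{[0,s-1]}(\lambda)=\begin{pmatrix}-\varepsilon_{s-1}b_{s-1}Q_{s-1}&-Q_s\\ \varepsilon_{s-1}b_{s-1}P_{s-1}&P_s\end{pmatrix}$. Let $w_1(\lambda),w_2(\lambda)$ be the roots of $\det(T(\lambda)-w)=0$ and $E=\{\lambda\in\mathbb{C}:|w_1(\lambda)|=|w_2(\lambda)|\}$. *)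

theory Defs
  imports "HOL-Analysis.Analysis" "HOL-Computational_Algebra.Polynomial"
begin

section \<open>Generalized Jacobi matrices (0-based indexing throughout)\<close>

definition GJ_data :: "(nat \<Rightarrow> real poly) \<Rightarrow> (nat \<Rightarrow> real) \<Rightarrow> (nat \<Rightarrow> real) \<Rightarrow> bool" where
  "GJ_data p eps b \<longleftrightarrow>
     (\<forall>j. lead_coeff (p j) = 1 \<and> degree (p j) \<ge> 1 \<and> (eps j = 1 \<or> eps j = -1) \<and> b j > 0)"

definition periodic_data ::
  "nat \<Rightarrow> (nat \<Rightarrow> real poly) \<Rightarrow> (nat \<Rightarrow> real) \<Rightarrow> (nat \<Rightarrow> real) \<Rightarrow> bool" where
  "periodic_data s p eps b \<longleftrightarrow>
     (\<forall>j. p (j + s) = p j \<and> b (j + s) = b j \<and> eps (j + s) = eps j)"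

definition companion :: "real poly \<Rightarrow> nat \<Rightarrow> nat \<Rightarrow> real" where
  "companion p i k =
     (if i < degree p \<and> k < degree p then
        (if k = degree p - 1 then - coeff p i else if i = k + 1 then 1 else 0)
      else 0)"

definition symmetrizator :: "real poly \<Rightarrow> nat \<Rightarrow> nat \<Rightarrow> real" where
  "symmetrizator p i k = (if i < degree p \<and> k < degree p then coeff p (i + k + 1) else 0)"

definition block_off :: "(nat \<Rightarrow> real poly) \<Rightarrow> nat \<Rightarrow> nat" where
  "block_off p j = (\<Sum>i<j. degree (p i))"

definition block_of :: "(nat \<Rightarrow> real poly) \<Rightarrow> nat \<Rightarrow> nat" where
  "block_of p n = (LEAST j. n < block_off p (Suc j))"

definition GJ_matrix ::
  "(nat \<Rightarrow> real poly) \<Rightarrow> (nat \<Rightarrow> real) \<Rightarrow> (nat \<Rightarrow> real) \<Rightarrow> nat \<Rightarrow> nat \<Rightarrow> complex" where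
  "GJ_matrix p eps b i k =
     (let j = block_of p i; r = i - block_off p j;
          l = block_of p k; c = k - block_off p l
      in complex_of_real
        (if j = l then companion (p j) r c
         else if j = Suc l then (if r = 0 \<and> c = degree (p l) - 1 then b l else 0)
         else if l = Suc j then (if r = 0 \<and> c = degree (p l) - 1 then eps j * eps l * b j else 0)
         else 0))"

definition l2 :: "(nat \<Rightarrow> complex) \<Rightarrow> bool" where
  "l2 x \<longleftrightarrow> summable (\<lambda>n. (cmod (x n))\<^sup>2)"

definition GJ_apply ::
  "(nat \<Rightarrow> real poly) \<Rightarrow> (nat \<Rightarrow> real) \<Rightarrow> (nat \<Rightarrow> real) \<Rightarrow> (nat \<Rightarrow> complex) \<Rightarrow> nat \<Rightarrow> complex" where
  "GJ_apply p eps b x i = (\<Sum>k. GJ_matrix p eps b i k * x k)"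

text \<open>Resolvent set of the (bounded) operator H on l^2: H - lambda is a bijection of l^2
  (its inverse is then automatically bounded).\<close>
definition GJ_resolvent_set ::
  "(nat \<Rightarrow> real poly) \<Rightarrow> (nat \<Rightarrow> real) \<Rightarrow> (nat \<Rightarrow> real) \<Rightarrow> complex set" where
  "GJ_resolvent_set p eps b =
     {z. \<forall>y. l2 y \<longrightarrow> (\<exists>!x. l2 x \<and> (\<forall>i. GJ_apply p eps b x i - z * x i = y i))}"

definition e0 :: "nat \<Rightarrow> complex" where
  "e0 i = (if i = 0 then 1 else 0)"

definition GJ_resolvent_e ::
  "(nat \<Rightarrow> real poly) \<Rightarrow> (nat \<Rightarrow> real) \<Rightarrow> (nat \<Rightarrow> real) \<Rightarrow> complex \<Rightarrow> nat \<Rightarrow> complex" where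
  "GJ_resolvent_e p eps b z =
     (THE x. l2 x \<and> (\<forall>i. GJ_apply p eps b x i - z * x i = e0 i))"

text \<open>Gram operator G = diag(eps_0 E_{p_0}^{-1}, eps_1 E_{p_1}^{-1}, ...).\<close>
definition gram_apply ::
  "(nat \<Rightarrow> real poly) \<Rightarrow> (nat \<Rightarrow> real) \<Rightarrow> (nat \<Rightarrow> complex) \<Rightarrow> nat \<Rightarrow> complex" where
  "gram_apply p eps x i =
     (let j = block_of p i; n = degree (p j); off = block_off p j;
          u = (THE u :: nat \<Rightarrow> complex. (\<forall>c\<ge>n. u c = 0) \<and>
                 (\<forall>r<n. (\<Sum>c<n. complex_of_real (symmetrizator (p j) r c) * u c) = x (off + r)))
      in complex_of_real (eps j) * u (i - off))"

definition indef_inner ::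
  "(nat \<Rightarrow> real poly) \<Rightarrow> (nat \<Rightarrow> real) \<Rightarrow> (nat \<Rightarrow> complex) \<Rightarrow> (nat \<Rightarrow> complex) \<Rightarrow> complex" where
  "indef_inner p eps x y = (\<Sum>i. gram_apply p eps x i * cnj (y i))"

definition m_function ::
  "(nat \<Rightarrow> real poly) \<Rightarrow> (nat \<Rightarrow> real) \<Rightarrow> (nat \<Rightarrow> real) \<Rightarrow> complex \<Rightarrow> complex" where
  "m_function p eps b z = indef_inner p eps (GJ_resolvent_e p eps b z) e0"

definition Wmat ::
  "(nat \<Rightarrow> real poly) \<Rightarrow> (nat \<Rightarrow> real) \<Rightarrow> (nat \<Rightarrow> real) \<Rightarrow> nat \<Rightarrow> complex \<Rightarrow> complex^2^2" where
  "Wmat p eps b j z =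
     vector [vector [0, - complex_of_real (eps j / b j)],
             vector [complex_of_real (eps j * b j), poly (map_poly complex_of_real (p j)) z / complex_of_real (b j)]]"

fun Wprod ::
  "(nat \<Rightarrow> real poly) \<Rightarrow> (nat \<Rightarrow> real) \<Rightarrow> (nat \<Rightarrow> real) \<Rightarrow> nat \<Rightarrow> complex \<Rightarrow> complex^2^2" where
  "Wprod p eps b 0 z = Wmat p eps b 0 z"
| "Wprod p eps b (Suc j) z = Wprod p eps b j z ** Wmat p eps b (Suc j) z"

definition Ppol :: "(nat \<Rightarrow> real poly) \<Rightarrow> (nat \<Rightarrow> real) \<Rightarrow> (nat \<Rightarrow> real) \<Rightarrow> nat \<Rightarrow> complex \<Rightarrow> complex" where
  "Ppol p eps b j z =
     (case j of 0 \<Rightarrow> 1 | Suc i \<Rightarrow> (Wprod p eps b i z *v vector [0, 1]) $ 2)"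

definition Qpol :: "(nat \<Rightarrow> real poly) \<Rightarrow> (nat \<Rightarrow> real) \<Rightarrow> (nat \<Rightarrow> real) \<Rightarrow> nat \<Rightarrow> complex \<Rightarrow> complex" where
  "Qpol p eps b j z =
     (case j of 0 \<Rightarrow> 0 | Suc i \<Rightarrow> - (Wprod p eps b i z *v vector [0, 1]) $ 1)"

definition monodromy :: "nat \<Rightarrow> (nat \<Rightarrow> real poly) \<Rightarrow> (nat \<Rightarrow> real) \<Rightarrow> (nat \<Rightarrow> real) \<Rightarrow> complex \<Rightarrow> complex^2^2" where
  "monodromy s p eps b z = Wprod p eps b (s - 1) z"

text \<open>w1, w2 are the roots (with multiplicity) of w^2 - tr(T) w + det(T) = det(T - w).\<close>
definition Eset :: "nat \<Rightarrow> (nat \<Rightarrow> real poly) \<Rightarrow> (nat \<Rightarrow> real) \<Rightarrow> (nat \<Rightarrow> real) \<Rightarrow> complex set" where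
  "Eset s p eps b =
     {z. \<exists>w1 w2. w1 + w2 = trace (monodromy s p eps b z) \<and> w1 * w2 = det (monodromy s p eps b z)
               \<and> cmod w1 = cmod w2}"

end

theory Submission
  imports Defs
begin

text \<open>
  With the transfer matrices one writes down the Weyl solution y_j = Q_j + m P_j of the
  three-term recurrence behind H, where m is the right-hand side of the formula. The
  Wronskian identity makes the monodromy matrix T unimodular, so its eigenvalues are the
  roots w, 1/w of w^2 - tau w + 1 with tau = tr T = P_s - c Q_{s-1}; off E, tau lies
  outside [-2, 2] and the root w = (tau - sqrt(tau^2 - 4))/2 satisfies |w| < 1. The choice
  of m makes (y_0, y_1) an eigenvector of the monodromy for w, hence y_{j+s} = w y_j, so
  the vector built blockwise from y decays geometrically and lies in l^2. It solves
  (H - z) x = e, so it is the resolvent vector, and its Gram pairing with e is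
  eps_0 y_0 = m. The square root is the branch tau sqrt(1 - 4/tau^2), which is
  holomorphic off E and asymptotic to tau, and this gives m \<rightarrow> 0 at infinity.
\<close>

lemma poly_as_sum_upto:
  fixes q :: "'a::comm_semiring_1 poly"
  assumes "degree q \<le> n"
  shows "poly q z = (\<Sum>i\<le>n. coeff q i * z ^ i)"
  unfolding poly_altdef
  by (rule sum.mono_neutral_left) (use assms in \<open>auto simp: coeff_eq_0\<close>)

lemma poly_div_power_tendsto_coeff:
  fixes q :: "complex poly"
  assumes "degree q \<le> n"
  shows "((\<lambda>z. poly q z / z ^ n) \<longlongrightarrow> coeff q n) at_infinity"
proof -
  have "eventually (\<lambda>z. (\<Sum>i\<le>n. coeff q i * inverse z ^ (n - i)) = poly q z / z ^ n) at_infinity"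
    using eventually_not_equal_at_infinity[of 0]
  proof (rule eventually_mono)
    fix z :: complex assume z: "z \<noteq> 0"
    have "coeff q i * inverse z ^ (n - i) = coeff q i * z ^ i / z ^ n" if "i \<le> n" for i
      using z that by (simp add: power_diff power_inverse field_simps)
    thus "(\<Sum>i\<le>n. coeff q i * inverse z ^ (n - i)) = poly q z / z ^ n"
      by (simp add: poly_as_sum_upto[OF assms] sum_divide_distrib)
  qed
  moreover have "((\<lambda>z. \<Sum>i\<le>n. coeff q i * inverse z ^ (n - i))
                   \<longlongrightarrow> (\<Sum>i\<le>n. coeff q i * 0 ^ (n - i))) at_infinity"
    by (intro tendsto_sum tendsto_mult_left tendsto_power tendsto_inverse_0)
  moreover have "(\<Sum>i\<le>n. coeff q i * (0::complex) ^ (n - i)) = coeff q n"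
  proof -
    have "(\<Sum>i\<le>n. coeff q i * (0::complex) ^ (n - i)) = (\<Sum>i\<le>n. if i = n then coeff q i else 0)"
      by (rule sum.cong) auto
    thus ?thesis by simp
  qed
  ultimately show ?thesis using tendsto_cong by force
qed

lemma summable_power_div:
  fixes a :: real
  assumes a: "0 < a" "a < 1" and N: "0 < N"
  shows "summable (\<lambda>n. a ^ (n div N))"
proof -
  define \<rho> where "\<rho> = root N a"
  have r0: "0 < \<rho>" and r1: "\<rho> < 1" using a N by (simp_all add: \<rho>_def)
  have rN: "\<rho> ^ N = a" using a N by (simp add: \<rho>_def real_root_pow_pos)
  have bound: "norm (a ^ (n div N)) \<le> \<rho> ^ n / \<rho> ^ N" for n
  proof -
    have "n \<le> N * (n div N) + N"
      using N by (metis add_le_cancel_left div_mult_mod_eq mod_less_divisor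
                   mult.commute less_imp_le)
    hence "\<rho> ^ (N * (n div N) + N) \<le> \<rho> ^ n"
      using r0 r1 by (intro power_decreasing) auto
    hence "a ^ (n div N) * \<rho> ^ N \<le> \<rho> ^ n"
      by (simp add: rN[symmetric] power_mult power_add)
    thus ?thesis using r0 a by (simp add: field_simps)
  qed
  have "summable (\<lambda>n. \<rho> ^ n / \<rho> ^ N)"
    by (intro summable_divide summable_geometric) (use r0 r1 in auto)
  thus ?thesis by (rule summable_comparison_test[rotated]) (use bound in auto)
qed

lemma sums_single_value: "(\<lambda>k. if k = a then v else 0) sums v"
  using sums_single[of a "\<lambda>_. v"] by simp

lemma vec2_eq_iff: "(v::'a^2) = w \<longleftrightarrow> v$1 = w$1 \<and> v$2 = w$2"
  by (metis exhaust_2 vec_eq_iff)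

lemma mat2_mult:
  "(vector [vector [a, b], vector [c, d]] :: 'a::comm_ring_1^2^2) ** vector [vector [e, f], vector [g, h]]
   = (vector [vector [a*e+b*g, a*f+b*h], vector [c*e+d*g, c*f+d*h]] :: 'a^2^2)"
  by (simp add: vec2_eq_iff[of "_ :: 'a^2^2"] vec2_eq_iff[of "_ :: 'a^2"] matrix_matrix_mult_def sum_2)

lemma mat2_mult_vector_0_1:
  "(vector [vector [a, b], vector [c, d]] :: 'a::comm_ring_1^2^2) *v vector [0, 1] = vector [b, d]"
  by (simp add: vec2_eq_iff[of "_ :: 'a^2"] matrix_vector_mult_def sum_2)

section \<open>A branch of sqrt(w^2 - 4)\<close>

definition sqrt_sq_minus_four :: "complex \<Rightarrow> complex" where
  "sqrt_sq_minus_four w = w * csqrt (1 - 4 / w^2)"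

definition critical_segment :: "complex set" where
  "critical_segment = {w. Im w = 0 \<and> \<bar>Re w\<bar> \<le> 2}"

lemma one_minus_four_div_square_notin_nonpos_Reals:
  assumes "w \<notin> critical_segment"
  shows "1 - 4 / w^2 \<notin> \<real>\<^sub>\<le>\<^sub>0"
proof
  assume "1 - 4 / w^2 \<in> \<real>\<^sub>\<le>\<^sub>0"
  then obtain t where t: "t \<le> 0" "1 - 4 / w^2 = complex_of_real t"
    by (auto simp: nonpos_Reals_def)
  have "w \<noteq> 0" using assms by (auto simp: critical_segment_def)
  with t have w2: "w^2 = complex_of_real (4 / (1 - t))"
    by (simp add: field_simps)
  have "Im (w^2) = 0" "Re (w^2) > 0" using w2 t by auto
  hence "Im w = 0" by (auto simp: power2_eq_square)
  then obtain x where x: "w = complex_of_real x"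
    by (metis complex_is_Real_iff Reals_cases)
  have "x^2 = 4 / (1 - t)" using w2 x by (metis of_real_eq_iff of_real_power)
  also have "\<dots> \<le> 2^2" using t by (simp add: divide_le_eq)
  finally have "\<bar>x\<bar> \<le> 2" using abs_le_square_iff[of x 2] by simp
  with x assms show False by (auto simp: critical_segment_def)
qed

lemma Re_csqrt_pos:
  assumes "u \<notin> \<real>\<^sub>\<le>\<^sub>0"
  shows "Re (csqrt u) > 0"
proof (rule ccontr)
  assume "\<not> Re (csqrt u) > 0"
  hence "csqrt u = \<i> * complex_of_real (Im (csqrt u))"
    using Re_csqrt[of u] by (simp add: complex_eq_iff)
  hence "u = (\<i> * complex_of_real (Im (csqrt u)))^2"
    by (metis power2_csqrt)
  hence "u = complex_of_real (- ((Im (csqrt u))^2))"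
    by (simp add: power_mult_distrib)
  moreover have "complex_of_real (- ((Im (csqrt u))^2)) \<in> \<real>\<^sub>\<le>\<^sub>0"
    by (simp only: nonpos_Reals_of_real_iff) simp
  ultimately show False using assms by simp
qed

lemma sqrt_sq_minus_four_squared: "w \<noteq> 0 \<Longrightarrow> (sqrt_sq_minus_four w)^2 = w^2 - 4"
  by (simp add: sqrt_sq_minus_four_def power_mult_distrib field_simps)

lemma norm_sqrt_sq_minus_four_diff_le:
  assumes "w \<noteq> 0"
  shows "cmod (sqrt_sq_minus_four w - w) \<le> 4 / cmod w"
proof -
  define a where "a = csqrt (1 - 4 / w^2)"
  have "Re a \<ge> 0" unfolding a_def by (rule Re_csqrt)
  hence a1: "cmod (a + 1) \<ge> 1" using complex_Re_le_cmod[of "a + 1"] by simp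
  hence "a + 1 \<noteq> 0" by auto
  moreover have "(a - 1) * (a + 1) = - 4 / w^2"
    unfolding a_def by (simp add: algebra_simps power2_eq_square[symmetric])
  ultimately have a_minus_1: "a - 1 = - 4 / (w^2 * (a + 1))"
    by (metis (no_types, lifting) divide_divide_eq_left nonzero_mult_div_cancel_right)
  have "sqrt_sq_minus_four w - w = w * (a - 1)"
    by (simp add: sqrt_sq_minus_four_def a_def algebra_simps)
  also have "\<dots> = w * (- 4 / (w^2 * (a + 1)))" by (simp only: a_minus_1)
  also have "\<dots> = - 4 / (w * (a + 1))"
    using assms by (simp add: power2_eq_square)
  finally have "cmod (sqrt_sq_minus_four w - w) = 4 / (cmod w * cmod (a + 1))"
    by (simp add: norm_divide norm_mult)
  also have "\<dots> \<le> 4 / cmod w"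
  proof -
    have "cmod w \<le> cmod w * cmod (a + 1)" using a1 by (simp add: mult_le_cancel_left1)
    thus ?thesis using assms a1 by (intro divide_left_mono) (auto intro!: mult_pos_pos)
  qed
  finally show ?thesis .
qed

text \<open>The two roots of t^2 - w t + 1 have product 1; the one taken here is the smaller.\<close>

lemma norm_small_root_lt_1:
  assumes "w \<notin> critical_segment"
  shows "cmod ((w - sqrt_sq_minus_four w) / 2) < 1"
proof -
  have w0: "w \<noteq> 0" using assms by (auto simp: critical_segment_def)
  define a where "a = csqrt (1 - 4 / w^2)"
  have Ra: "Re a > 0"
    unfolding a_def by (rule Re_csqrt_pos[OF one_minus_four_div_square_notin_nonpos_Reals[OF assms]])
  define u where "u = w * (1 - a) / 2"
  define v where "v = w * (1 + a) / 2"
  have "u * v = w^2 * (1 - a^2) / 4"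
    by (simp add: u_def v_def algebra_simps power2_eq_square)
  also have "\<dots> = 1" using w0 by (simp add: a_def field_simps)
  finally have "cmod u * cmod v = 1" by (metis norm_mult norm_one)
  moreover have "(cmod (1 - a))^2 = (1 - Re a)^2 + (Im a)^2"
    and "(cmod (1 + a))^2 = (1 + Re a)^2 + (Im a)^2" by (simp_all add: cmod_def)
  hence "(cmod (1 - a))^2 < (cmod (1 + a))^2"
    using Ra by (simp add: power2_eq_square algebra_simps)
  hence "cmod (1 - a) < cmod (1 + a)" by (simp add: power_less_imp_less_base)
  hence "cmod u < cmod v" using w0 by (simp add: u_def v_def norm_mult norm_divide)
  ultimately have "cmod u < 1"
    by (smt (verit, best) mult_le_cancel_right1 norm_ge_zero)
  moreover have "(w - sqrt_sq_minus_four w) / 2 = u"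
    by (simp add: u_def sqrt_sq_minus_four_def a_def algebra_simps)
  ultimately show ?thesis by simp
qed

section \<open>Transfer matrices and the polynomials P_j, Q_j\<close>

locale gen_jacobi =
  fixes p :: "nat \<Rightarrow> real poly" and eps b :: "nat \<Rightarrow> real"
  assumes data: "GJ_data p eps b"
begin

abbreviation d :: "nat \<Rightarrow> nat" where "d j \<equiv> degree (p j)"
abbreviation off :: "nat \<Rightarrow> nat" where "off \<equiv> block_off p"

lemma b_pos: "b j > 0" using data by (auto simp: GJ_data_def)
lemma b_nonzero: "b j \<noteq> 0" using b_pos[of j] by simp
lemma eps_cases: "eps j = 1 \<or> eps j = -1" using data by (auto simp: GJ_data_def)
lemma degree_pos: "d j \<ge> 1" using data by (auto simp: GJ_data_def)
lemma monic: "lead_coeff (p j) = 1" using data by (auto simp: GJ_data_def)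

lemma eps_nonzero: "eps j \<noteq> 0" using eps_cases[of j] by auto

lemma eps_squared [simp]: "complex_of_real (eps j) * complex_of_real (eps j) = 1"
  using eps_cases[of j] by auto

lemma eps_squared_mult [simp]: "complex_of_real (eps j) * (complex_of_real (eps j) * x) = x"
  by (simp add: mult.assoc[symmetric])

definition pc :: "nat \<Rightarrow> complex poly" where
  "pc j = map_poly complex_of_real (p j)"

lemma degree_pc: "degree (pc j) = d j"
  unfolding pc_def by (rule degree_map_poly) simp

lemma coeff_pc: "coeff (pc j) i = complex_of_real (coeff (p j) i)"
  unfolding pc_def by (simp add: coeff_map_poly)

lemma pc_nonzero: "pc j \<noteq> 0"
  using degree_pos[of j] degree_pc[of j] by auto

definition kappa :: "nat \<Rightarrow> complex" where
  "kappa j = complex_of_real (eps (Suc j) * eps j * b j)"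

text \<open>The recursions read off from the second row of W_{[0,j]} = W_{[0,j-1]} W_j.\<close>

fun P_poly :: "nat \<Rightarrow> complex poly" where
  "P_poly 0 = 1"
| "P_poly (Suc 0) = smult (1 / complex_of_real (b 0)) (pc 0)"
| "P_poly (Suc (Suc j)) =
     smult (1 / complex_of_real (b (Suc j))) (pc (Suc j) * P_poly (Suc j) - smult (kappa j) (P_poly j))"

fun Q_poly :: "nat \<Rightarrow> complex poly" where
  "Q_poly 0 = 0"
| "Q_poly (Suc 0) = [: complex_of_real (eps 0 / b 0) :]"
| "Q_poly (Suc (Suc j)) =
     smult (1 / complex_of_real (b (Suc j))) (pc (Suc j) * Q_poly (Suc j) - smult (kappa j) (Q_poly j))"

definition P :: "nat \<Rightarrow> complex \<Rightarrow> complex" where "P j z = poly (P_poly j) z"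
definition Q :: "nat \<Rightarrow> complex \<Rightarrow> complex" where "Q j z = poly (Q_poly j) z"

lemma P_0 [simp]: "P 0 z = 1" and Q_0 [simp]: "Q 0 z = 0"
  by (simp_all add: P_def Q_def)

lemma P_1: "P (Suc 0) z = poly (pc 0) z / complex_of_real (b 0)"
  and Q_1: "Q (Suc 0) z = complex_of_real (eps 0 / b 0)"
  by (simp_all add: P_def Q_def)

lemma P_Suc_Suc:
  "P (Suc (Suc j)) z = (poly (pc (Suc j)) z * P (Suc j) z - kappa j * P j z) / complex_of_real (b (Suc j))"
  and Q_Suc_Suc:
  "Q (Suc (Suc j)) z = (poly (pc (Suc j)) z * Q (Suc j) z - kappa j * Q j z) / complex_of_real (b (Suc j))"
  by (simp_all add: P_def Q_def)

lemma Wprod_eq: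
  "Wprod p eps b j z =
     vector [vector [- complex_of_real (eps j * b j) * Q j z, - Q (Suc j) z],
             vector [complex_of_real (eps j * b j) * P j z, P (Suc j) z]]"
proof (induction j)
  case 0
  show ?case by (simp add: Wmat_def P_1 Q_1 pc_def)
next
  case (Suc j)
  have bn: "complex_of_real (b (Suc j)) \<noteq> 0" using b_nonzero by simp
  have W: "Wmat p eps b (Suc j) z =
             vector [vector [0, - complex_of_real (eps (Suc j) / b (Suc j))],
                     vector [complex_of_real (eps (Suc j) * b (Suc j)),
                             poly (pc (Suc j)) z / complex_of_real (b (Suc j))]]"
    by (simp add: Wmat_def pc_def)
  have Q_entry: "(- complex_of_real (eps j * b j) * Q j z) * (- complex_of_real (eps (Suc j) / b (Suc j)))
       + (- Q (Suc j) z) * (poly (pc (Suc j)) z / complex_of_real (b (Suc j))) = - Q (Suc (Suc j)) z"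
    unfolding Q_Suc_Suc kappa_def using bn by (simp add: field_simps)
  have P_entry: "(complex_of_real (eps j * b j) * P j z) * (- complex_of_real (eps (Suc j) / b (Suc j)))
       + P (Suc j) z * (poly (pc (Suc j)) z / complex_of_real (b (Suc j))) = P (Suc (Suc j)) z"
    unfolding P_Suc_Suc kappa_def using bn by (simp add: field_simps)
  show ?case
    unfolding Wprod.simps Suc.IH W mat2_mult Q_entry P_entry by (simp add: mult.commute)
qed

lemma Ppol_eq: "Ppol p eps b j z = P j z"
  by (cases j) (simp_all add: Ppol_def Wprod_eq mat2_mult_vector_0_1)

lemma Qpol_eq: "Qpol p eps b j z = Q j z"
  by (cases j) (simp_all add: Qpol_def Wprod_eq mat2_mult_vector_0_1)

lemma wronskian_P_Q:
  "complex_of_real (eps j * b j) * (P j z * Q (Suc j) z - Q j z * P (Suc j) z) = 1"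
proof (induction j)
  case 0
  show ?case using b_nonzero[of 0] eps_squared[of 0] by (simp add: P_1 Q_1 field_simps)
next
  case (Suc j)
  have "complex_of_real (b (Suc j)) \<noteq> 0" using b_nonzero by simp
  hence "complex_of_real (eps (Suc j) * b (Suc j)) *
          (P (Suc j) z * Q (Suc (Suc j)) z - Q (Suc j) z * P (Suc (Suc j)) z)
        = complex_of_real (eps (Suc j)) * kappa j * (Q (Suc j) z * P j z - P (Suc j) z * Q j z)"
    unfolding P_Suc_Suc Q_Suc_Suc by (simp add: field_simps)
  also have "\<dots> = complex_of_real (eps j * b j) * (P j z * Q (Suc j) z - Q j z * P (Suc j) z)"
    unfolding kappa_def by (simp add: algebra_simps)
  finally show ?case using Suc.IH by simp
qed

lemma off_Suc: "off (Suc j) = off j + d j"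
  by (simp add: block_off_def)

lemma off_strict_mono: "i < j \<Longrightarrow> off i < off j"
proof (induction j)
  case (Suc j) then show ?case using degree_pos[of j] by (auto simp: off_Suc less_Suc_eq)
qed simp

lemma off_mono: "i \<le> j \<Longrightarrow> off i \<le> off j"
  using off_strict_mono by (metis le_eq_less_or_eq)

lemma off_ge: "j \<le> off j"
proof (induction j)
  case (Suc j) thus ?case using degree_pos[of j] by (simp add: off_Suc)
qed (simp add: block_off_def)

lemma P_poly_nonzero_degree: "P_poly j \<noteq> 0 \<and> degree (P_poly j) = off j"
proof (induction j rule: P_poly.induct)
  case 1 then show ?case by (simp add: block_off_def)
next
  case 2 then show ?case using b_nonzero[of 0] pc_nonzero[of 0] by (simp add: block_off_def degree_pc)
next
  case (3 j)
  have "degree (pc (Suc j) * P_poly (Suc j)) = off (Suc (Suc j))"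
    using 3 pc_nonzero by (simp add: degree_mult_eq degree_pc off_Suc)
  moreover have "degree (smult (kappa j) (P_poly j)) < off (Suc (Suc j))"
    using 3 off_strict_mono[of j "Suc (Suc j)"] by (simp add: le_less_trans[OF degree_smult_le])
  ultimately have deg: "degree (pc (Suc j) * P_poly (Suc j) - smult (kappa j) (P_poly j)) = off (Suc (Suc j))"
    by (metis degree_add_eq_left diff_conv_add_uminus degree_minus)
  moreover have "off (Suc (Suc j)) > 0" using off_strict_mono[of 0 "Suc (Suc j)"] by simp
  ultimately show ?case using b_nonzero[of "Suc j"] by auto
qed

lemma degree_Q_poly_less: "j = 0 \<or> degree (Q_poly j) < off j"
proof (induction j rule: Q_poly.induct)
  case 2 then show ?case using degree_pos[of 0] by (simp add: block_off_def)
next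
  case (3 j)
  have lhs: "degree (pc (Suc j) * Q_poly (Suc j)) < off (Suc (Suc j))"
    using 3 degree_mult_le[of "pc (Suc j)" "Q_poly (Suc j)"] by (simp add: degree_pc off_Suc)
  have "degree (Q_poly j) \<le> off j" using 3 by (cases j) auto
  hence rhs: "degree (smult (kappa j) (Q_poly j)) < off (Suc (Suc j))"
    using off_strict_mono[of j "Suc (Suc j)"] degree_smult_le[of "kappa j" "Q_poly j"] by linarith
  show ?case using degree_diff_less[OF lhs rhs] by (simp add: le_less_trans[OF degree_smult_le])
qed simp


section \<open>Block vectors and the resolvent equation\<close>

lemma block_of_off_add: "c < d j \<Longrightarrow> block_of p (off j + c) = j"
  unfolding block_of_def
proof (rule Least_equality)
  assume "c < d j" thus "off j + c < off (Suc j)" by (simp add: off_Suc)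
next
  fix y assume "off j + c < off (Suc y)"
  thus "j \<le> y" using off_mono[of "Suc y" j] by (cases "j \<le> y") auto
qed

lemma block_decomposition: "\<exists>l c. n = off l + c \<and> c < d l"
proof -
  define l where "l = block_of p n"
  have "\<exists>j. n < off (Suc j)" using off_ge[of "Suc n"] by (intro exI[of _ n]) simp
  hence upper: "n < off (Suc l)" unfolding l_def block_of_def by (rule LeastI_ex)
  have "off l \<le> n"
  proof (cases l)
    case (Suc l')
    hence "\<not> n < off (Suc l')"
      using not_less_Least[of l' "\<lambda>j. n < off (Suc j)"] unfolding l_def block_of_def by simp
    thus ?thesis using Suc by simp
  qed (simp add: block_off_def)
  thus ?thesis using upper by (intro exI[of _ l] exI[of _ "n - off l"]) (simp add: off_Suc)
qed

lemma off_add_eq_iff: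
  assumes "c < d l" "c' < d l'"
  shows "off l + c = off l' + c' \<longleftrightarrow> l = l' \<and> c = c'"
  using block_of_off_add[OF assms(1)] block_of_off_add[OF assms(2)] by auto

lemma degree_minus_1_less: "d j - 1 < d j"
  using degree_pos[of j] by simp

lemma GJ_matrix_block_entry:
  assumes "r < d j" "c < d l"
  shows "GJ_matrix p eps b (off j + r) (off l + c) = complex_of_real
     (if j = l then (if c = d j - 1 then - coeff (p j) r else if r = c + 1 then 1 else 0)
      else if j = Suc l then (if r = 0 \<and> c = d l - 1 then b l else 0)
      else if l = Suc j then (if r = 0 \<and> c = d l - 1 then eps j * eps l * b j else 0)
      else 0)"
  unfolding GJ_matrix_def Let_def block_of_off_add[OF assms(1)] block_of_off_add[OF assms(2)]
    add_diff_cancel_left'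
  using assms by (cases "j = l") (simp_all add: companion_def)

definition horner_tail :: "complex \<Rightarrow> nat \<Rightarrow> nat \<Rightarrow> complex" where
  "horner_tail z j r = (\<Sum>c<d j. complex_of_real (coeff (p j) (r + c + 1)) * z ^ c)"

lemma horner_tail_shift:
  "(\<Sum>c<Suc (d j). complex_of_real (coeff (p j) (r + c)) * z ^ c)
     = complex_of_real (coeff (p j) r) + z * horner_tail z j r"
  unfolding sum.lessThan_Suc_shift horner_tail_def sum_distrib_left
  by (simp add: algebra_simps)

lemma horner_tail_0: "complex_of_real (coeff (p j) 0) + z * horner_tail z j 0 = poly (pc j) z"
proof -
  have "poly (pc j) z = (\<Sum>c<Suc (d j). complex_of_real (coeff (p j) (0 + c)) * z ^ c)"
    by (simp add: poly_altdef degree_pc lessThan_Suc_atMost coeff_pc)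
  thus ?thesis using horner_tail_shift[of j 0 z] by simp
qed

lemma horner_tail_step:
  assumes "r \<ge> 1"
  shows "horner_tail z j (r - 1) = complex_of_real (coeff (p j) r) + z * horner_tail z j r"
proof -
  have "horner_tail z j (r - 1) = (\<Sum>c<d j. complex_of_real (coeff (p j) (r + c)) * z ^ c)"
    unfolding horner_tail_def using assms by (intro sum.cong) auto
  also have "\<dots> = (\<Sum>c<Suc (d j). complex_of_real (coeff (p j) (r + c)) * z ^ c)"
    using assms by (simp add: coeff_eq_0)
  finally show ?thesis using horner_tail_shift by simp
qed

lemma horner_tail_last: "horner_tail z j (d j - 1) = 1"
proof -
  have "horner_tail z j (d j - 1) = (\<Sum>c<d j. if c = 0 then 1 else 0)"
    unfolding horner_tail_def
    by (rule sum.cong) (use degree_pos[of j] monic[of j] in \<open>auto simp: coeff_eq_0\<close>)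
  also have "\<dots> = 1" using degree_pos[of j] by simp
  finally show ?thesis .
qed

text \<open>
  Block j of the vector is t_j times the Horner tails of p_j at z. With this ansatz every
  row of (H - z) x vanishes except the first row of each block, where a three-term
  recurrence for t remains.
\<close>

definition block_vector :: "complex \<Rightarrow> (nat \<Rightarrow> complex) \<Rightarrow> nat \<Rightarrow> complex" where
  "block_vector z t n = t (block_of p n) * horner_tail z (block_of p n) (n - off (block_of p n))"

lemma block_vector_at: "c < d l \<Longrightarrow> block_vector z t (off l + c) = t l * horner_tail z l c"
  by (simp add: block_vector_def block_of_off_add)

lemma block_vector_inner_row:
  assumes r: "1 \<le> r" "r < d j"
  shows "GJ_apply p eps b (block_vector z t) (off j + r) - z * block_vector z t (off j + r) = 0"
proof -
  define a where "a = complex_of_real (coeff (p j) r)"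
  have "GJ_matrix p eps b (off j + r) k * block_vector z t k =
          (if k = off j + (d j - 1) then - a * t j else 0)
        + (if k = off j + (r - 1) then t j * horner_tail z j (r - 1) else 0)" for k
  proof -
    obtain l c where k: "k = off l + c" "c < d l" using block_decomposition by blast
    have r1: "r - 1 < d j" using r by simp
    show ?thesis
      unfolding k(1) GJ_matrix_block_entry[OF r(2) k(2)] block_vector_at[OF k(2)]
        off_add_eq_iff[OF k(2) degree_minus_1_less] off_add_eq_iff[OF k(2) r1]
      using r k(2) horner_tail_last[of z l] by (auto simp: a_def)
  qed
  hence "(\<lambda>k. GJ_matrix p eps b (off j + r) k * block_vector z t k)
           sums (- a * t j + t j * horner_tail z j (r - 1))"
    by (simp only:) (intro sums_add sums_single_value)
  hence "GJ_apply p eps b (block_vector z t) (off j + r) = - a * t j + t j * horner_tail z j (r - 1)"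
    unfolding GJ_apply_def by (rule sums_unique[symmetric])
  thus ?thesis
    using block_vector_at[OF r(2)] horner_tail_step[OF r(1), of z j] by (simp add: a_def algebra_simps)
qed

lemma block_vector_first_row:
  "GJ_apply p eps b (block_vector z t) (off j) - z * block_vector z t (off j)
     = (if j = 0 then 0 else complex_of_real (b (j - 1)) * t (j - 1)) - poly (pc j) z * t j
       + complex_of_real (eps j * eps (Suc j) * b j) * t (Suc j)"
proof -
  define a where "a = complex_of_real (coeff (p j) 0)"
  define below where "below = (if j = 0 then 0 else complex_of_real (b (j - 1)) * t (j - 1))"
  define above where "above = complex_of_real (eps j * eps (Suc j) * b j) * t (Suc j)"
  have d0: "0 < d j" using degree_pos[of j] by simp
  have "GJ_matrix p eps b (off j + 0) k * block_vector z t k =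
          (if k = off j + (d j - 1) then - a * t j else 0)
        + (if k = off (j - 1) + (d (j - 1) - 1) then below else 0)
        + (if k = off (Suc j) + (d (Suc j) - 1) then above else 0)" for k
  proof -
    obtain l c where k: "k = off l + c" "c < d l" using block_decomposition by blast
    show ?thesis
      unfolding k(1) GJ_matrix_block_entry[OF d0 k(2)] block_vector_at[OF k(2)]
        off_add_eq_iff[OF k(2) degree_minus_1_less]
      using k(2) horner_tail_last[of z l] by (cases j) (auto simp: a_def below_def above_def)
  qed
  hence "(\<lambda>k. GJ_matrix p eps b (off j + 0) k * block_vector z t k) sums (- a * t j + below + above)"
    by (simp only:) (intro sums_add sums_single_value)
  hence "GJ_apply p eps b (block_vector z t) (off j) = - a * t j + below + above"
    unfolding GJ_apply_def by (simp add: sums_unique[symmetric])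
  moreover have "block_vector z t (off j) = t j * horner_tail z j 0"
    using block_vector_at[OF d0] by simp
  ultimately show ?thesis
    unfolding horner_tail_0[of j z, symmetric] below_def above_def by (simp add: a_def algebra_simps)
qed

lemma block_vector_solves_resolvent_equation:
  assumes "\<And>j. (if j = 0 then 0 else complex_of_real (b (j - 1)) * t (j - 1)) - poly (pc j) z * t j
               + complex_of_real (eps j * eps (Suc j) * b j) * t (Suc j) = (if j = 0 then 1 else 0)"
  shows "GJ_apply p eps b (block_vector z t) n - z * block_vector z t n = e0 n"
proof -
  obtain j r where n: "n = off j + r" "r < d j" using block_decomposition by blast
  show ?thesis
  proof (cases "r = 0")
    case True
    have "off j = 0 \<longleftrightarrow> j = 0" using off_ge[of j] by (auto simp: block_off_def)
    thus ?thesis using block_vector_first_row[of z t j] assms[of j] n True by (simp add: e0_def)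
  next
    case False
    thus ?thesis using block_vector_inner_row[of r j z t] n by (simp add: e0_def)
  qed
qed

lemma symmetrizator_mult_powers:
  "r < d j \<Longrightarrow> (\<Sum>c<d j. complex_of_real (symmetrizator (p j) r c) * z ^ c) = horner_tail z j r"
  unfolding horner_tail_def by (rule sum.cong) (simp_all add: symmetrizator_def)

text \<open>E_p is triangular with respect to the anti-diagonal, which carries the leading coefficient 1.\<close>

lemma symmetrizator_kernel_trivial:
  assumes "\<forall>c\<ge>d j. v c = 0"
    and "\<forall>r<d j. (\<Sum>c<d j. complex_of_real (symmetrizator (p j) r c) * v c) = 0"
  shows "v c = 0"
proof (induction c rule: less_induct)
  case (less c)
  show ?case
  proof (cases "c < d j")
    case False then show ?thesis using assms(1) by simp
  next
    case True
    define r where "r = d j - 1 - c"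
    have "symmetrizator (p j) r c' * v c' = (if c' = c then v c else 0)" if "c' < d j" for c'
    proof (cases "c' < c")
      case False
      hence "r + c' + 1 \<ge> d j" "r + c' + 1 = d j \<longleftrightarrow> c' = c" using True by (auto simp: r_def)
      thus ?thesis using that monic[of j] by (auto simp: symmetrizator_def r_def coeff_eq_0)
    qed (use less in simp)
    hence "(\<Sum>c'<d j. complex_of_real (symmetrizator (p j) r c') * v c') = v c"
      using True by (simp add: sum.delta)
    thus ?thesis using assms(2) True by (simp add: r_def)
  qed
qed

lemma gram_apply_block_vector_0: "gram_apply p eps (block_vector z t) 0 = complex_of_real (eps 0) * t 0"
proof -
  have block_0: "block_of p 0 = 0" using block_of_off_add[of 0 0] degree_pos[of 0] by (simp add: block_off_def)
  define solves where "solves = (\<lambda>u :: nat \<Rightarrow> complex. (\<forall>c\<ge>d 0. u c = 0) \<and>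
     (\<forall>r<d 0. (\<Sum>c<d 0. complex_of_real (symmetrizator (p 0) r c) * u c) = block_vector z t (0 + r)))"
  define u0 where "u0 = (\<lambda>c. if c < d 0 then t 0 * z ^ c else 0)"
  have "block_vector z t (0 + r) = t 0 * horner_tail z 0 r" if "r < d 0" for r
    using block_vector_at[OF that] by (simp add: block_off_def)
  hence sol: "solves u0"
    unfolding solves_def u0_def
    by (auto simp: symmetrizator_mult_powers[symmetric] sum_distrib_left mult_ac intro!: sum.cong)
  have "u = u0" if "solves u" for u
  proof
    fix c
    show "u c = u0 c"
      using symmetrizator_kernel_trivial[of 0 "\<lambda>c. u c - u0 c" c] that sol
      by (simp add: solves_def right_diff_distrib sum_subtractf)
  qed
  hence "(THE u. solves u) = u0" using sol by blast
  moreover have "gram_apply p eps (block_vector z t) 0 = complex_of_real (eps 0) * (THE u. solves u) 0"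
    unfolding gram_apply_def Let_def block_0 solves_def by (simp add: block_off_def)
  ultimately show ?thesis using degree_pos[of 0] by (simp add: u0_def)
qed


definition weyl_solution :: "complex \<Rightarrow> complex \<Rightarrow> nat \<Rightarrow> complex" where
  "weyl_solution z m j = Q j z + m * P j z"

definition weyl_vector :: "complex \<Rightarrow> complex \<Rightarrow> nat \<Rightarrow> complex" where
  "weyl_vector z m = block_vector z (\<lambda>j. complex_of_real (eps j) * weyl_solution z m j)"

lemma weyl_solution_0 [simp]: "weyl_solution z m 0 = m"
  by (simp add: weyl_solution_def)

lemma weyl_solution_1:
  "complex_of_real (b 0) * weyl_solution z m (Suc 0) = poly (pc 0) z * m + complex_of_real (eps 0)"
  using b_nonzero[of 0] by (simp add: weyl_solution_def P_1 Q_1 field_simps)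

lemma weyl_solution_Suc_Suc:
  "complex_of_real (b (Suc j)) * weyl_solution z m (Suc (Suc j))
     = poly (pc (Suc j)) z * weyl_solution z m (Suc j) - kappa j * weyl_solution z m j"
  using b_nonzero[of "Suc j"] by (simp add: weyl_solution_def P_Suc_Suc Q_Suc_Suc field_simps)

lemma weyl_coordinates_recurrence:
  fixes z m :: complex
  defines "t \<equiv> \<lambda>j. complex_of_real (eps j) * weyl_solution z m j"
  shows "(if j = 0 then 0 else complex_of_real (b (j - 1)) * t (j - 1)) - poly (pc j) z * t j
           + complex_of_real (eps j * eps (Suc j) * b j) * t (Suc j) = (if j = 0 then 1 else 0)"
proof (cases j)
  case 0
  have "complex_of_real (eps 0 * eps 1 * b 0) * t 1
          = complex_of_real (eps 0) * (complex_of_real (b 0) * weyl_solution z m (Suc 0))"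
    by (simp add: t_def algebra_simps)
  also have "\<dots> = complex_of_real (eps 0) * (poly (pc 0) z * m) + 1"
    unfolding weyl_solution_1 by (simp add: algebra_simps)
  finally show ?thesis using 0 by (simp add: t_def algebra_simps)
next
  case (Suc i)
  have "complex_of_real (eps (Suc i) * eps (Suc (Suc i)) * b (Suc i)) * t (Suc (Suc i))
          = complex_of_real (eps (Suc i)) * (complex_of_real (b (Suc i)) * weyl_solution z m (Suc (Suc i)))"
    by (simp add: t_def algebra_simps)
  also have "\<dots> = complex_of_real (eps (Suc i)) *
                 (poly (pc (Suc i)) z * weyl_solution z m (Suc i) - kappa i * weyl_solution z m i)"
    unfolding weyl_solution_Suc_Suc ..
  finally show ?thesis using Suc by (simp add: t_def kappa_def algebra_simps)
qed

lemma weyl_vector_solves_resolvent_equation: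
  "GJ_apply p eps b (weyl_vector z m) n - z * weyl_vector z m n = e0 n"
  unfolding weyl_vector_def
  by (rule block_vector_solves_resolvent_equation) (rule weyl_coordinates_recurrence)

lemma gram_apply_weyl_vector_0: "gram_apply p eps (weyl_vector z m) 0 = m"
  by (simp add: weyl_vector_def gram_apply_block_vector_0)


end

lemma GJ_resolvent_e_eqI:
  assumes "z \<in> GJ_resolvent_set p eps b" "l2 x" "\<forall>i. GJ_apply p eps b x i - z * x i = e0 i"
  shows "GJ_resolvent_e p eps b z = x"
proof -
  have "l2 e0"
  proof -
    have "(\<lambda>n. (cmod (e0 n))^2) = (\<lambda>n. if n = 0 then 1 else 0)" by (simp add: fun_eq_iff e0_def)
    thus ?thesis unfolding l2_def using sums_summable[OF sums_single_value[of 0 "1::real"]] by simp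
  qed
  hence "\<exists>!x. l2 x \<and> (\<forall>i. GJ_apply p eps b x i - z * x i = e0 i)"
    using assms(1) by (simp add: GJ_resolvent_set_def)
  thus ?thesis unfolding GJ_resolvent_e_def by (rule the1_equality) (simp add: assms)
qed

lemma indef_inner_e0: "indef_inner p eps x e0 = gram_apply p eps x 0"
proof -
  have "(\<lambda>i. gram_apply p eps x i * cnj (e0 i)) = (\<lambda>i. if i = 0 then gram_apply p eps x 0 else 0)"
    by (simp add: fun_eq_iff e0_def)
  thus ?thesis
    unfolding indef_inner_def using sums_unique[OF sums_single_value[of 0 "gram_apply p eps x 0"]] by simp
qed

section \<open>The periodic case\<close>

locale periodic_gen_jacobi = gen_jacobi +
  fixes s :: nat
  assumes period_pos: "s \<ge> 1" and periodic: "periodic_data s p eps b"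
begin

definition c_s :: complex where
  "c_s = complex_of_real (eps (s - 1) * b (s - 1))"

definition tau :: "complex \<Rightarrow> complex" where
  "tau z = P s z - c_s * Q (s - 1) z"

definition sqrt_disc :: "complex \<Rightarrow> complex" where
  "sqrt_disc z = sqrt_sq_minus_four (tau z)"

definition m_formula :: "complex \<Rightarrow> complex" where
  "m_formula z = (- (P s z + c_s * Q (s - 1) z) + sqrt_disc z) / (2 * c_s * P (s - 1) z)"

lemma c_s_nonzero: "c_s \<noteq> 0"
  using b_nonzero eps_nonzero by (simp add: c_s_def)

lemma trace_monodromy: "trace (monodromy s p eps b z) = tau z"
  using period_pos by (simp add: monodromy_def Wprod_eq trace_def sum_2 tau_def c_s_def)

lemma det_monodromy: "det (monodromy s p eps b z) = 1"
proof -
  have "det (monodromy s p eps b z) =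
          c_s * (P (s - 1) z * Q (Suc (s - 1)) z - Q (s - 1) z * P (Suc (s - 1)) z)"
    by (simp add: monodromy_def Wprod_eq det_2 c_s_def algebra_simps)
  also have "\<dots> = 1" unfolding c_s_def by (rule wronskian_P_Q)
  finally show ?thesis .
qed

text \<open>On [-2, 2] the roots of w^2 - tau w + 1 are complex conjugate, hence of equal modulus.\<close>

lemma tau_notin_critical_segment:
  assumes "z \<notin> Eset s p eps b"
  shows "tau z \<notin> critical_segment"
proof
  assume "tau z \<in> critical_segment"
  then obtain x where x: "tau z = complex_of_real x" "\<bar>x\<bar> \<le> 2"
    unfolding critical_segment_def by (auto intro!: exI[of _ "Re (tau z)"] simp: complex_eq_iff)
  define y where "y = sqrt (1 - x^2 / 4)"
  have "x^2 \<le> 2^2" using x(2) by (metis abs_le_square_iff abs_numeral)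
  hence y2: "y^2 = 1 - x^2/4" unfolding y_def by (simp add: real_sqrt_pow2)
  have "Complex (x/2) y + Complex (x/2) (-y) = trace (monodromy s p eps b z)"
    using x by (simp add: trace_monodromy complex_eq_iff)
  moreover have "Complex (x/2) y * Complex (x/2) (-y) = det (monodromy s p eps b z)"
    using y2 by (simp add: det_monodromy complex_eq_iff power2_eq_square algebra_simps)
  moreover have "cmod (Complex (x/2) y) = cmod (Complex (x/2) (-y))" by (simp add: cmod_def)
  ultimately have "z \<in> Eset s p eps b" unfolding Eset_def by blast
  with assms show False by simp
qed

lemma tau_nonzero: "z \<notin> Eset s p eps b \<Longrightarrow> tau z \<noteq> 0"
  using tau_notin_critical_segment by (force simp: critical_segment_def)

definition tau_poly :: "complex poly" where
  "tau_poly = P_poly s - smult c_s (Q_poly (s - 1))"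

lemma poly_tau_poly: "poly tau_poly z = tau z"
  by (simp add: tau_def tau_poly_def P_def Q_def)

lemma degree_tau_poly: "degree tau_poly = off s" and lead_coeff_tau_poly: "coeff tau_poly (off s) \<noteq> 0"
proof -
  have Q_less: "degree (Q_poly (s - 1)) < off s"
    using degree_Q_poly_less[of "s - 1"] period_pos off_strict_mono[of "s - 1" s] by auto
  hence Q_small: "degree (smult c_s (Q_poly (s - 1))) < off s"
    using degree_smult_le[of c_s "Q_poly (s - 1)"] by linarith
  have P_deg: "degree (P_poly s) = off s" using P_poly_nonzero_degree by simp
  thus "degree tau_poly = off s" unfolding tau_poly_def
    using Q_small by (metis degree_add_eq_left diff_conv_add_uminus degree_minus)
  have "coeff tau_poly (off s) = coeff (P_poly s) (off s)"
    using Q_less by (simp add: tau_poly_def coeff_eq_0)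
  thus "coeff tau_poly (off s) \<noteq> 0"
    using P_poly_nonzero_degree[of s] P_deg by (metis leading_coeff_0_iff)
qed

lemma sqrt_disc_holomorphic: "sqrt_disc holomorphic_on (- Eset s p eps b)"
proof -
  have "sqrt_disc = (\<lambda>z. tau z * csqrt (1 - 4 / (tau z)^2))"
    by (simp add: sqrt_disc_def sqrt_sq_minus_four_def fun_eq_iff)
  moreover have "(\<lambda>z. tau z * csqrt (1 - 4 / (tau z)^2)) holomorphic_on (- Eset s p eps b)"
    unfolding poly_tau_poly[symmetric]
    by (intro holomorphic_intros holomorphic_on_csqrt')
       (use tau_nonzero one_minus_four_div_square_notin_nonpos_Reals tau_notin_critical_segment
         poly_tau_poly in auto)
  ultimately show ?thesis by simp
qed

lemma sqrt_disc_squared: "z \<notin> Eset s p eps b \<Longrightarrow> (sqrt_disc z)^2 = (tau z)^2 - 4"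
  by (simp add: sqrt_disc_def sqrt_sq_minus_four_squared tau_nonzero)

lemma tau_tendsto_infinity: "filterlim tau at_infinity at_infinity"
proof -
  have n: "off s \<ge> 1" using off_ge[of s] period_pos by simp
  have lim: "((\<lambda>z. tau z / z ^ off s) \<longlongrightarrow> coeff tau_poly (off s)) at_infinity"
    unfolding poly_tau_poly[symmetric] by (rule poly_div_power_tendsto_coeff) (simp add: degree_tau_poly)
  have "filterlim (\<lambda>z::complex. z ^ off s) at_infinity at_infinity"
    using n by (intro filterlim_power_at_infinity filterlim_ident) auto
  hence "filterlim (\<lambda>z. (tau z / z ^ off s) * z ^ off s) at_infinity at_infinity"
    by (rule tendsto_mult_filterlim_at_infinity[OF lim lead_coeff_tau_poly])
  moreover have "eventually (\<lambda>z. (tau z / z ^ off s) * z ^ off s = tau z) at_infinity"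
    using eventually_not_equal_at_infinity[of 0] by (rule eventually_mono) simp
  ultimately show ?thesis using filterlim_cong[OF refl refl] by fastforce
qed

lemma sqrt_disc_minus_tau_tendsto_0: "((\<lambda>z. sqrt_disc z - tau z) \<longlongrightarrow> 0) at_infinity"
proof (rule Lim_null_comparison)
  show "eventually (\<lambda>z. norm (sqrt_disc z - tau z) \<le> 4 * norm (inverse (tau z))) at_infinity"
    using filterlim_at_infinity_imp_eventually_ne[OF tau_tendsto_infinity, of 0]
    by (rule eventually_mono)
       (use norm_sqrt_sq_minus_four_diff_le in \<open>auto simp: sqrt_disc_def norm_inverse divide_inverse\<close>)
  have "((\<lambda>z. inverse (tau z)) \<longlongrightarrow> 0) at_infinity"
    by (rule filterlim_compose[OF tendsto_inverse_0 tau_tendsto_infinity])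
  thus "((\<lambda>z. 4 * norm (inverse (tau z))) \<longlongrightarrow> 0) at_infinity"
    using tendsto_mult_left[of _ 0 _ 4] tendsto_norm_zero by force
qed

text \<open>
  After division by z^{deg P_{s-1}} the numerator tends to 0, since sqrt_disc - tau \<rightarrow> 0 and
  deg Q_{s-1} < deg P_{s-1}, while the denominator tends to 2 c_s lead_coeff P_{s-1} \<noteq> 0.
\<close>

lemma m_formula_tendsto_0: "(m_formula \<longlongrightarrow> 0) at_infinity"
proof -
  define n where "n = off (s - 1)"
  have deg: "degree (P_poly (s - 1)) = n" "degree (Q_poly (s - 1)) \<le> n" "coeff (Q_poly (s - 1)) n = 0"
    using P_poly_nonzero_degree[of "s - 1"] degree_Q_poly_less[of "s - 1"]
    by (auto simp: n_def coeff_eq_0)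
  have "coeff (P_poly (s - 1)) n \<noteq> 0"
    using P_poly_nonzero_degree[of "s - 1"] deg(1) leading_coeff_0_iff by metis
  moreover have "((\<lambda>z. P (s - 1) z / z ^ n) \<longlongrightarrow> coeff (P_poly (s - 1)) n) at_infinity"
    unfolding P_def by (rule poly_div_power_tendsto_coeff[OF eq_imp_le[OF deg(1)]])
  moreover have "((\<lambda>z. Q (s - 1) z / z ^ n) \<longlongrightarrow> 0) at_infinity"
    using poly_div_power_tendsto_coeff[OF deg(2)] unfolding Q_def deg(3) .
  moreover have "((\<lambda>z. 1 / z ^ n :: complex) \<longlongrightarrow> coeff 1 n) at_infinity"
    using poly_div_power_tendsto_coeff[of 1 n] by simp
  ultimately have "((\<lambda>z. ((sqrt_disc z - tau z) * (1 / z ^ n) - 2 * c_s * (Q (s - 1) z / z ^ n))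
                         / (2 * c_s * (P (s - 1) z / z ^ n)))
                    \<longlongrightarrow> (0 * coeff 1 n - 2 * c_s * 0) / (2 * c_s * coeff (P_poly (s - 1)) n)) at_infinity"
    using c_s_nonzero by (intro tendsto_intros sqrt_disc_minus_tau_tendsto_0) auto
  moreover have "eventually (\<lambda>z. ((sqrt_disc z - tau z) * (1 / z ^ n) - 2 * c_s * (Q (s - 1) z / z ^ n))
                         / (2 * c_s * (P (s - 1) z / z ^ n)) = m_formula z) at_infinity"
    using eventually_not_equal_at_infinity[of 0]
  proof (rule eventually_mono)
    fix z :: complex assume z: "z \<noteq> 0"
    have "(sqrt_disc z - tau z) * (1 / z ^ n) - 2 * c_s * (Q (s - 1) z / z ^ n)
            = (- (P s z + c_s * Q (s - 1) z) + sqrt_disc z) / z ^ n"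
      using z by (simp add: tau_def field_simps)
    thus "((sqrt_disc z - tau z) * (1 / z ^ n) - 2 * c_s * (Q (s - 1) z / z ^ n))
            / (2 * c_s * (P (s - 1) z / z ^ n)) = m_formula z"
      using z by (simp add: m_formula_def divide_divide_eq_left')
  qed
  ultimately show ?thesis using tendsto_cong by force
qed


lemma periodic_shift: "p (j + k * s) = p j \<and> b (j + k * s) = b j \<and> eps (j + k * s) = eps j"
proof (induction k)
  case (Suc k)
  have shift: "j + Suc k * s = (j + k * s) + s" by simp
  show ?case unfolding shift using Suc periodic[unfolded periodic_data_def, rule_format, of "j + k * s"] by simp
qed simp

lemma p_mod: "p j = p (j mod s)"
  using periodic_shift[of "j mod s" "j div s"] by simp

lemma pc_shift: "pc (j + s) = pc j"
  using periodic_shift[of j 1] by (simp add: pc_def)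

lemma kappa_shift: "kappa (j + s) = kappa j"
  using periodic_shift[of j 1] periodic_shift[of "Suc j" 1] by (simp add: kappa_def)

definition period_size :: nat where
  "period_size = (\<Sum>i<s. d i)"

lemma degree_le_period_size: "d j \<le> period_size"
  unfolding period_size_def p_mod[of j] by (rule member_le_sum) (use period_pos in auto)

lemma period_size_pos: "period_size > 0"
  using degree_le_period_size[of 0] degree_pos[of 0] by simp

lemma off_le: "off j \<le> j * period_size"
  using sum_mono[of "{..<j}" d "\<lambda>_. period_size"] degree_le_period_size
  by (simp add: block_off_def)

lemma norm_horner_tail_le:
  assumes "c < d j"
  shows "cmod (horner_tail z j c) \<le> (\<Sum>i<s. \<Sum>c<d i. cmod (horner_tail z i c))"
proof -
  have "cmod (horner_tail z j c) = cmod (horner_tail z (j mod s) c)"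
    unfolding horner_tail_def p_mod[of j] ..
  also have "\<dots> \<le> (\<Sum>c<d (j mod s). cmod (horner_tail z (j mod s) c))"
    by (rule member_le_sum) (use assms p_mod[of j] in auto)
  also have "\<dots> \<le> (\<Sum>i<s. \<Sum>c<d i. cmod (horner_tail z i c))"
    by (rule member_le_sum[where f = "\<lambda>i. \<Sum>c<d i. cmod (horner_tail z i c)"])
       (use period_pos in \<open>auto intro: sum_nonneg\<close>)
  finally show ?thesis .
qed

definition floquet :: "complex \<Rightarrow> complex" where
  "floquet z = (tau z - sqrt_disc z) / 2"

abbreviation weyl :: "complex \<Rightarrow> nat \<Rightarrow> complex" where
  "weyl z \<equiv> weyl_solution z (m_formula z)"

context
  fixes z assumes z_notin_E: "z \<notin> Eset s p eps b" and P_nonzero: "P (s - 1) z \<noteq> 0"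
begin

lemma norm_floquet_less_1: "cmod (floquet z) < 1"
  using norm_small_root_lt_1[OF tau_notin_critical_segment[OF z_notin_E]]
  by (simp add: floquet_def sqrt_disc_def)

lemma floquet_nonzero: "floquet z \<noteq> 0"
proof
  assume "floquet z = 0"
  moreover have "floquet z * ((tau z + sqrt_disc z) / 2) = 1"
    using sqrt_disc_squared[OF z_notin_E] by (simp add: floquet_def power2_eq_square field_simps)
  ultimately show False by simp
qed

lemma c_s_mult_weyl_pred: "c_s * weyl z (s - 1) = - floquet z"
  using P_nonzero c_s_nonzero
  by (simp add: weyl_solution_def m_formula_def floquet_def tau_def field_simps)

text \<open>
  m_formula is chosen so that (weyl_0, weyl_1) is an eigenvector of the monodromy for the
  eigenvalue floquet z. The computation is the quadratic equation for m, which follows from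
  sqrt_disc^2 = tau^2 - 4 and the Wronskian identity.
\<close>

lemma weyl_period: "weyl z s = floquet z * weyl z 0"
proof -
  define P' where "P' = P (s - 1) z"
  define Q' where "Q' = Q (s - 1) z"
  define Ps where "Ps = P s z"
  define Qs where "Qs = Q s z"
  define r where "r = sqrt_disc z"
  define A where "A = Ps + c_s * Q'"
  have wronskian: "c_s * (P' * Qs - Q' * Ps) = 1"
    using wronskian_P_Q[of "s - 1" z] period_pos by (simp add: c_s_def P'_def Q'_def Ps_def Qs_def)
  have r2: "r^2 = (Ps - c_s * Q')^2 - 4"
    using sqrt_disc_squared[OF z_notin_E] by (simp add: r_def tau_def Ps_def Q'_def)
  have m: "2 * c_s * P' * m_formula z = r - A"
    using P_nonzero c_s_nonzero by (simp add: m_formula_def P'_def A_def Ps_def Q'_def r_def field_simps)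
  have w: "floquet z = (Ps - c_s * Q' - r) / 2"
    by (simp add: floquet_def tau_def Ps_def Q'_def r_def)
  have "2 * c_s * P' * (Qs + m_formula z * Ps - floquet z * m_formula z)
          = 2 * c_s * P' * Qs + (2 * c_s * P' * m_formula z) * (Ps - floquet z)"
    by (simp add: algebra_simps)
  also have "\<dots> = 2 * c_s * P' * Qs + (r^2 - A^2) / 2"
    unfolding m w by (simp add: A_def field_simps power2_eq_square)
  also have "\<dots> = 2 * (c_s * (P' * Qs - Q' * Ps)) - 2"
    unfolding r2 A_def by (simp add: field_simps power2_eq_square)
  finally have "2 * c_s * P' * (Qs + m_formula z * Ps - floquet z * m_formula z) = 0"
    using wronskian by simp
  hence "Qs + m_formula z * Ps = floquet z * m_formula z"
    using P_nonzero c_s_nonzero by (simp add: P'_def)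
  thus ?thesis by (simp add: weyl_solution_def Qs_def Ps_def)
qed

lemma weyl_period_Suc: "weyl z (Suc s) = floquet z * weyl z (Suc 0)"
proof -
  have kappa: "kappa (s - 1) = complex_of_real (eps 0) * c_s"
    using periodic_shift[of 0 1] period_pos by (simp add: kappa_def c_s_def)
  have shift: "b s = b 0" "pc s = pc 0" using periodic_shift[of 0 1] pc_shift[of 0] by simp_all
  have "complex_of_real (b 0) * weyl z (Suc s)
          = poly (pc s) z * weyl z s - kappa (s - 1) * weyl z (s - 1)"
    using weyl_solution_Suc_Suc[of "s - 1" z "m_formula z"] period_pos shift by simp
  also have "\<dots> = floquet z * (poly (pc 0) z * m_formula z + complex_of_real (eps 0))"
    unfolding kappa shift weyl_period
    using c_s_mult_weyl_pred by (simp add: algebra_simps)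
  also have "\<dots> = complex_of_real (b 0) * (floquet z * weyl z (Suc 0))"
    unfolding weyl_solution_1[symmetric] by (simp add: algebra_simps)
  finally show ?thesis using b_nonzero[of 0] by simp
qed

lemma weyl_shift: "weyl z (j + s) = floquet z * weyl z j"
proof (induction j rule: less_induct)
  case (less j)
  consider "j = 0" | "j = Suc 0" | i where "j = Suc (Suc i)" by (metis not0_implies_Suc)
  then show ?case
  proof cases
    case 3
    have "complex_of_real (b (Suc i)) * weyl z (j + s)
            = poly (pc (Suc i)) z * weyl z (Suc i + s) - kappa i * weyl z (i + s)"
      using weyl_solution_Suc_Suc[of "i + s" z] 3 pc_shift[of "Suc i"] kappa_shift[of i]
        periodic_shift[of "Suc i" 1] by simp
    also have "\<dots> = floquet z *
                 (poly (pc (Suc i)) z * weyl z (Suc i) - kappa i * weyl z i)"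
      using less.IH[of i] less.IH[of "Suc i"] 3 by (simp add: algebra_simps)
    also have "\<dots> = floquet z * (complex_of_real (b (Suc i)) * weyl z j)"
      unfolding 3 weyl_solution_Suc_Suc ..
    finally show ?thesis using b_nonzero[of "Suc i"] by simp
  qed (use weyl_period weyl_period_Suc in simp_all)
qed

lemma weyl_shift_multiple: "weyl z (i + k * s) = floquet z ^ k * weyl z i"
proof (induction k)
  case (Suc k)
  have shift: "i + Suc k * s = (i + k * s) + s" by simp
  show ?case unfolding shift using Suc weyl_shift[of "i + k * s"] by simp
qed simp

lemma norm_weyl_le: "cmod (weyl z j) \<le> cmod (floquet z) ^ (j div s) * (\<Sum>i<s. cmod (weyl z i))"
proof -
  have "cmod (weyl z j) = cmod (floquet z) ^ (j div s) * cmod (weyl z (j mod s))"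
    using weyl_shift_multiple[of "j mod s" "j div s"] by (simp add: norm_mult norm_power)
  moreover have "cmod (weyl z (j mod s)) \<le> (\<Sum>i<s. cmod (weyl z i))"
    by (rule member_le_sum[where f = "\<lambda>i. cmod (weyl z i)"]) (use period_pos in auto)
  ultimately show ?thesis by (simp add: mult_left_mono)
qed

lemma norm_weyl_vector_le:
  "cmod (weyl_vector z (m_formula z) n)
     \<le> (\<Sum>i<s. cmod (weyl z i)) * (\<Sum>i<s. \<Sum>c<d i. cmod (horner_tail z i c))
         * cmod (floquet z) ^ (n div (period_size * s))"
proof -
  obtain l c where n: "n = off l + c" "c < d l" using block_decomposition by blast
  have "cmod (complex_of_real (eps l)) = 1" using eps_cases[of l] by auto
  hence "cmod (weyl_vector z (m_formula z) n) = cmod (weyl z l) * cmod (horner_tail z l c)"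
    using n by (simp add: weyl_vector_def block_vector_at norm_mult)
  also have "\<dots> \<le> (cmod (floquet z) ^ (l div s) * (\<Sum>i<s. cmod (weyl z i)))
                    * (\<Sum>i<s. \<Sum>c<d i. cmod (horner_tail z i c))"
    by (intro mult_mono norm_weyl_le norm_horner_tail_le n(2)) (auto intro!: sum_nonneg mult_nonneg_nonneg)
  also have "\<dots> \<le> (cmod (floquet z) ^ (n div (period_size * s)) * (\<Sum>i<s. cmod (weyl z i)))
                    * (\<Sum>i<s. \<Sum>c<d i. cmod (horner_tail z i c))"
  proof -
    have "n < Suc l * period_size" using n off_le[of "Suc l"] by (simp add: off_Suc)
    hence "n div period_size \<le> l" using less_mult_imp_div_less[of n "Suc l" period_size] by simp
    hence "n div (period_size * s) \<le> l div s" by (simp add: div_mult2_eq div_le_mono)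
    hence "cmod (floquet z) ^ (l div s) \<le> cmod (floquet z) ^ (n div (period_size * s))"
      using norm_floquet_less_1 by (intro power_decreasing) auto
    thus ?thesis by (intro mult_right_mono) (auto intro!: sum_nonneg)
  qed
  finally show ?thesis by (simp add: algebra_simps)
qed

lemma l2_weyl_vector: "l2 (weyl_vector z (m_formula z))"
proof -
  define C where "C = (\<Sum>i<s. cmod (weyl z i)) * (\<Sum>i<s. \<Sum>c<d i. cmod (horner_tail z i c))"
  define a where "a = (cmod (floquet z))^2"
  have a: "0 < a" "a < 1"
    using floquet_nonzero norm_floquet_less_1 by (simp_all add: a_def power_less_one_iff)
  have bound: "norm ((cmod (weyl_vector z (m_formula z) n))^2) \<le> C^2 * a ^ (n div (period_size * s))" for n
    using power_mono[OF norm_weyl_vector_le[of n], of 2]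
    by (simp add: C_def a_def power_mult_distrib power_mult[symmetric] mult.commute)
  have "summable (\<lambda>n. C^2 * a ^ (n div (period_size * s)))"
    using period_size_pos period_pos by (intro summable_mult summable_power_div a) simp
  thus ?thesis unfolding l2_def by (rule summable_comparison_test'[of _ 0]) (rule bound)
qed

lemma m_function_eq_m_formula:
  assumes "z \<in> GJ_resolvent_set p eps b"
  shows "m_function p eps b z = m_formula z"
  unfolding m_function_def
  using GJ_resolvent_e_eqI[OF assms l2_weyl_vector] weyl_vector_solves_resolvent_equation
  by (simp add: indef_inner_e0 gram_apply_weyl_vector_0)

end

end

theorem proposition2p9:
  fixes s :: nat and p :: "nat \<Rightarrow> real poly" and eps b :: "nat \<Rightarrow> real"
  assumes "s \<ge> 1"
    and "GJ_data p eps b"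
    and "periodic_data s p eps b"
  defines "c \<equiv> complex_of_real (eps (s - 1) * b (s - 1))"
  defines "D \<equiv> (\<lambda>z. (Ppol p eps b s z - c * Qpol p eps b (s - 1) z)\<^sup>2 - 4)"
  shows "\<exists>r :: complex \<Rightarrow> complex.
           r holomorphic_on (- Eset s p eps b)
         \<and> (\<forall>z\<in>- Eset s p eps b. (r z)\<^sup>2 = D z)
         \<and> ((\<lambda>z. (- (Ppol p eps b s z + c * Qpol p eps b (s - 1) z) + r z)
                  / (2 * c * Ppol p eps b (s - 1) z)) \<longlongrightarrow> 0) at_infinity
         \<and> (\<forall>z. z \<in> GJ_resolvent_set p eps b \<and> z \<notin> Eset s p eps b \<and> Ppol p eps b (s - 1) z \<noteq> 0 \<longrightarrow>
              m_function p eps b z =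
                (- (Ppol p eps b s z + c * Qpol p eps b (s - 1) z) + r z)
                  / (2 * c * Ppol p eps b (s - 1) z))"
proof -
  interpret periodic_gen_jacobi p eps b s
    using assms(1-3) by unfold_locales
  have PQ: "Ppol p eps b = P" "Qpol p eps b = Q"
    by (simp_all add: fun_eq_iff Ppol_eq Qpol_eq)
  have "c = c_s" by (simp add: c_def c_s_def)
  hence "D z = (tau z)^2 - 4" for z by (simp add: D_def PQ tau_def)
  thus ?thesis
    unfolding PQ \<open>c = c_s\<close>
    using sqrt_disc_holomorphic sqrt_disc_squared m_formula_tendsto_0 m_function_eq_m_formula
    by (intro exI[of _ sqrt_disc], unfold m_formula_def[symmetric]) auto
qed

end
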